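(* Let $V$ be a vertex operator algebra, fix $n\in\mathbb{N}$, and let $u\in V$ be an element of weight $\mathrm{wt}\,u\ge -n$ such that the vertex subalgebra $V^u=\langle u\rangle^1$ satisfies the permutation property. Then $A_n^u$ is generated by the elements \[ u_{-2n-1}^{i_{2n+1}}u_{-2n}^{i_{2n}}\cdots u_{-1}^{i_1}\mathbf{1}+O_n(V),\qquad i_1,\dots,i_{2n+1}\in\mathbb{N}. \] Moreover, if $V^u$ acts strongly on a subset $W\subset V$, then every element of $A_n^u.W$ can be written, modulo $O_n^\circ(V)$, as a linear combination of elements $u_{-2n-1}^{i_{2n+1}}u_{-2n}^{i_{2n}}\cdots u_{-1}^{i_1}v+O_n(V)$ with $v\in W$ and $i_1,\dots,i_{2n+1}\in\mathbb{N}$.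
   Context: $V$ has vacuum $\mathbf{1}$, modes $Y(v,x)=\sum v_kx^{-k-1}$, Virasoro operators $L(m)$, weights $\mathrm{wt}$. For homogeneous $a$, $a\circ_nb=\mathrm{Res}_x(1+x)^{\mathrm{wt}\,a+n}Y(a,x)b\,x^{-2n-2}$; $O_n^\circ(V)=\mathrm{span}\{a\circ_nb\}$, $O^L(V)=\{(L(-1)+L(0))v\}$, $O_n(V)=O^L(V)+O_n^\circ(V)$, and $A_n(V)=V/O_n(V)$ is the level $n$ Zhu algebra with product $a*_nb=\sum_{m=0}^n(-1)^m\binom{m+n}{n}\mathrm{Res}_x(1+x)^{\mathrm{wt}\,a+n}Y(a,x)b\,x^{-n-m-1}$. $V^u=\langle u\rangle^1$ is the span of all $u_{-k_1}\cdots u_{-k_r}\mathbf{1}$ ($r\in\mathbb{N}$, $k_i\in\mathbb{Z}_+$), assumed to be a vertex subalgebra. For $v\in V$, $F_r(v)$ is the span of $u_{-k_1}\cdots u_{-k_p}v$ with $p\le r$ and $k_i\ge1$. The permutation property for $V^u$ acting on $W$ means: for all $m\in\mathbb{Z}_+$, permutations $\sigma$ of $\{1,\dots,m\}$, $u^{(1)},\dots,u^{(m)}\in V^u$, $v\in W$ and $k_1,\dots,k_m\in\mathbb{Z}$, $u^{(1)}_{-k_1}\cdots u^{(m)}_{-k_m}v-u^{(\sigma(1))}_{-k_{\sigma(1)}}\cdots u^{(\sigma(m))}_{-k_{\sigma(m)}}v\in F_{m-1}(v)$; "$V^u$ satisfies the permutation property" means this with $W=V^u$. $V^u$ acts strongly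 on $W$ if it satisfies the permutation property on $W$ and $a_jw=0$ for all $a\in V^u$, $w\in W$, $j\ge0$. $A_n^u$ is the subalgebra of $A_n(V)$ generated by $\{a+O_n(V):a\in V^u\}$, and $A_n^u.W$ is the set of elements $u_{-k_1}\cdots u_{-k_m}v+O_n(V)$ with $v\in W$, $m\in\mathbb{N}$, $k_i\in\mathbb{Z}_+$. *)

theory Defs
  imports Complex_Main "HOL-Combinatorics.Permutations"
begin

text \<open>A VOA is given by: the scalar multiplication of the underlying complex vector
space (the carrier is the whole type), the modes  md V a k b = a_k b  (so that
Y(a,x) b = sum_k a_k b x^(-k-1)), the vacuum, the conformal vector, and the
weight spaces V_(m), m an integer.\<close>

record 'v voa =
  scal :: "complex \<Rightarrow> 'v \<Rightarrow> 'v"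
  md   :: "'v \<Rightarrow> int \<Rightarrow> 'v \<Rightarrow> 'v"
  vac  :: 'v
  cv   :: 'v
  wsp  :: "int \<Rightarrow> 'v set"

text \<open>Sum of a finitely supported family (all families used below are finitely
supported by the truncation axiom).\<close>
definition fsum :: "(nat \<Rightarrow> 'v::ab_group_add) \<Rightarrow> 'v" where
  "fsum f = sum f {i. f i \<noteq> 0}"

definition ibin :: "int \<Rightarrow> nat \<Rightarrow> complex" where
  "ibin r i = (of_int r) gchoose i"

definition isgn :: "int \<Rightarrow> complex" where
  "isgn r = (if even r then 1 else -1)"

definition Lop :: "'v voa \<Rightarrow> int \<Rightarrow> 'v \<Rightarrow> 'v" where
  "Lop V m = md V (cv V) (m + 1)"

definition is_VOA :: "('v::ab_group_add) voa \<Rightarrow> bool" where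
  "is_VOA V \<longleftrightarrow>
     vector_space (scal V)
   \<and> (\<forall>a k. Vector_Spaces.linear (scal V) (scal V) (md V a k))
   \<and> (\<forall>k b. Vector_Spaces.linear (scal V) (scal V) (\<lambda>a. md V a k b))
   \<comment> \<open>grading V = direct sum of the V_(m)\<close>
   \<and> (\<forall>m. module.subspace (scal V) (wsp V m))
   \<and> (\<forall>v. \<exists>!f. finite {m. f m \<noteq> 0} \<and> (\<forall>m. f m \<in> wsp V m)
                \<and> v = (\<Sum>m\<in>{m. f m \<noteq> 0}. f m))
   \<and> (\<forall>m. \<exists>B. finite B \<and> wsp V m \<subseteq> module.span (scal V) B)
   \<and> (\<exists>N. \<forall>m<N. wsp V m = {0})
   \<comment> \<open>truncation\<close>
   \<and> (\<forall>a b. \<exists>K. \<forall>k\<ge>K. md V a k b = 0)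
   \<comment> \<open>vacuum and creation\<close>
   \<and> (\<forall>k b. md V (vac V) k b = (if k = -1 then b else 0))
   \<and> (\<forall>a k. k \<ge> 0 \<longrightarrow> md V a k (vac V) = 0)
   \<and> (\<forall>a. md V a (-1) (vac V) = a)
   \<comment> \<open>Jacobi identity (in Borcherds' component form)\<close>
   \<and> (\<forall>a b c p q r.
        fsum (\<lambda>i. scal V (ibin p i) (md V (md V a (r + int i) b) (p + q - int i) c))
      = fsum (\<lambda>i. scal V ((-1) ^ i * ibin r i)
                 (md V a (p + r - int i) (md V b (q + int i) c)
                  - scal V (isgn r) (md V b (q + r - int i) (md V a (p + int i) c)))))
   \<comment> \<open>conformal vector\<close>
   \<and> cv V \<in> wsp V 2
   \<and> (\<exists>c::complex. \<forall>m k v.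
        Lop V m (Lop V k v) - Lop V k (Lop V m v)
      = scal V (of_int (m - k)) (Lop V (m + k) v)
        + (if m + k = 0 then scal V (of_int (m ^ 3 - m) / 12 * c) v else 0))
   \<and> (\<forall>m. \<forall>v\<in>wsp V m. Lop V 0 v = scal V (of_int m) v)
   \<and> (\<forall>a k b. md V (Lop V (-1) a) k b = scal V (- of_int k) (md V a (k - 1) b))"

definition hcomp :: "('v::ab_group_add) voa \<Rightarrow> 'v \<Rightarrow> int \<Rightarrow> 'v" where
  "hcomp V v = (THE f. finite {m. f m \<noteq> 0} \<and> (\<forall>m. f m \<in> wsp V m)
                       \<and> v = (\<Sum>m\<in>{m. f m \<noteq> 0}. f m))"

text \<open>a o_n b for a homogeneous of weight wa:
  Res_x (1+x)^(wa+n) Y(a,x) b x^(-2n-2) = sum_i binom(wa+n,i) a_(i-2n-2) b.\<close>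
definition circ_hom :: "('v::ab_group_add) voa \<Rightarrow> nat \<Rightarrow> int \<Rightarrow> 'v \<Rightarrow> 'v \<Rightarrow> 'v" where
  "circ_hom V n wa a b =
     fsum (\<lambda>i. scal V (ibin (wa + int n) i) (md V a (int i - 2 * int n - 2) b))"

definition Ocirc :: "('v::ab_group_add) voa \<Rightarrow> nat \<Rightarrow> 'v set" where
  "Ocirc V n = module.span (scal V) {circ_hom V n m a b | m a b. a \<in> wsp V m}"

definition OL :: "('v::ab_group_add) voa \<Rightarrow> 'v set" where
  "OL V = {Lop V (-1) v + Lop V 0 v | v. True}"

definition On :: "('v::ab_group_add) voa \<Rightarrow> nat \<Rightarrow> 'v set" where
  "On V n = {x + y | x y. x \<in> OL V \<and> y \<in> Ocirc V n}"

definition star_hom :: "('v::ab_group_add) voa \<Rightarrow> nat \<Rightarrow> int \<Rightarrow> 'v \<Rightarrow> 'v \<Rightarrow> 'v" where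
  "star_hom V n wa a b =
     (\<Sum>m\<le>n. scal V ((-1) ^ m * of_nat ((m + n) choose n))
        (fsum (\<lambda>i. scal V (ibin (wa + int n) i)
                     (md V a (int i - int n - int m - 1) b))))"

definition star :: "('v::ab_group_add) voa \<Rightarrow> nat \<Rightarrow> 'v \<Rightarrow> 'v \<Rightarrow> 'v" where
  "star V n a b = (\<Sum>m\<in>{m. hcomp V a m \<noteq> 0}. star_hom V n m (hcomp V a m) b)"

text \<open>Preimage in V of the subalgebra of A_n(V) = V/O_n(V) generated by the
images of the elements of G.\<close>
inductive_set zhu_gen :: "('v::ab_group_add) voa \<Rightarrow> nat \<Rightarrow> 'v set \<Rightarrow> 'v set"
  for V n G where
  gen: "a \<in> G \<Longrightarrow> a \<in> zhu_gen V n G"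
| ideal: "x \<in> On V n \<Longrightarrow> x \<in> zhu_gen V n G"
| add: "x \<in> zhu_gen V n G \<Longrightarrow> y \<in> zhu_gen V n G \<Longrightarrow> x + y \<in> zhu_gen V n G"
| smult: "x \<in> zhu_gen V n G \<Longrightarrow> scal V c x \<in> zhu_gen V n G"
| mult: "x \<in> zhu_gen V n G \<Longrightarrow> y \<in> zhu_gen V n G \<Longrightarrow> star V n x y \<in> zhu_gen V n G"

definition umon :: "('v::ab_group_add) voa \<Rightarrow> 'v \<Rightarrow> int list \<Rightarrow> 'v \<Rightarrow> 'v" where
  "umon V u ks v = foldr (\<lambda>k w. md V u (- k) w) ks v"

definition Vu :: "('v::ab_group_add) voa \<Rightarrow> 'v \<Rightarrow> 'v set" where
  "Vu V u = module.span (scal V) {umon V u ks (vac V) | ks. \<forall>k\<in>set ks. k \<ge> 1}"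

definition Ffilt :: "('v::ab_group_add) voa \<Rightarrow> 'v \<Rightarrow> nat \<Rightarrow> 'v \<Rightarrow> 'v set" where
  "Ffilt V u r v = module.span (scal V)
     {umon V u ks v | ks. length ks \<le> r \<and> (\<forall>k\<in>set ks. k \<ge> 1)}"

definition gmon :: "('v::ab_group_add) voa \<Rightarrow> 'v list \<Rightarrow> int list \<Rightarrow> 'v \<Rightarrow> 'v" where
  "gmon V as ks v = foldr (\<lambda>(a, k) w. md V a (- k) w) (zip as ks) v"

definition perm_prop :: "('v::ab_group_add) voa \<Rightarrow> 'v \<Rightarrow> 'v set \<Rightarrow> bool" where
  "perm_prop V u W \<longleftrightarrow>
     (\<forall>m::nat. \<forall>\<sigma> as ks v. m \<ge> 1 \<and> \<sigma> permutes {..<m} \<and> length as = m \<and> length ks = m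
        \<and> set as \<subseteq> Vu V u \<and> v \<in> W \<longrightarrow>
        gmon V as ks v - gmon V (map (\<lambda>i. as ! \<sigma> i) [0..<m]) (map (\<lambda>i. ks ! \<sigma> i) [0..<m]) v
          \<in> Ffilt V u (m - 1) v)"

definition acts_strongly :: "('v::ab_group_add) voa \<Rightarrow> 'v \<Rightarrow> 'v set \<Rightarrow> bool" where
  "acts_strongly V u W \<longleftrightarrow> perm_prop V u W
     \<and> (\<forall>a\<in>Vu V u. \<forall>w\<in>W. \<forall>j::int. j \<ge> 0 \<longrightarrow> md V a j w = 0)"

text \<open>u_(-2n-1)^(i_(2n+1)) ... u_(-1)^(i_1) v.\<close>
definition ordmon :: "('v::ab_group_add) voa \<Rightarrow> 'v \<Rightarrow> nat \<Rightarrow> (nat \<Rightarrow> nat) \<Rightarrow> 'v \<Rightarrow> 'v" where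
  "ordmon V u n i v = fold (\<lambda>j w. (md V u (- int j) ^^ i j) w) [1..<2 * n + 2] v"

text \<open>Representatives of the elements of A_n^u.W.\<close>
definition AuW_reps :: "('v::ab_group_add) voa \<Rightarrow> 'v \<Rightarrow> 'v set \<Rightarrow> 'v set" where
  "AuW_reps V u W = {umon V u ks v | ks v. v \<in> W \<and> (\<forall>k\<in>set ks. k \<ge> 1)}"

end

theory Submission
  imports Defs
begin

text \<open>
  Modulo O_n^circ(V), a mode u_(-k) with k >= 2n+2 can be traded for modes of smaller index:
  for a = L(-1)^p u with p = k - 2n - 2, the element a o_n w is a nonzero multiple of
  u_(-k) w plus multiples of u_(-j) w with j < k. By the permutation property, reordering the
  modes of u_(-k_1) ... u_(-k_m) v changes it only by an element of F_(m-1)(v), and a mode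
  u_j with j >= 0 moved next to v kills it. Induction on m and, inside, on k_1 + ... + k_m
  therefore writes every such monomial as a combination of the ordered monomials
  u_(-2n-1)^(i_(2n+1)) ... u_(-1)^(i_1) v modulo O_n^circ(V). Taking v = 1 puts V^u inside the
  subalgebra of A_n(V) generated by the ordered monomials applied to the vacuum.
\<close>

definition ordered_modes :: "nat \<Rightarrow> (nat \<Rightarrow> nat) \<Rightarrow> int list" where
  "ordered_modes n i = concat (map (\<lambda>j. replicate (i j) (int j)) (rev [1..<2 * n + 2]))"

lemma umon_Nil [simp]: "umon V u [] v = v"
  by (simp add: umon_def)

lemma umon_Cons [simp]: "umon V u (k # ks) v = md V u (- k) (umon V u ks v)"
  by (simp add: umon_def)

lemma umon_append: "umon V u (ks @ ks') v = umon V u ks (umon V u ks' v)"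
  by (simp add: umon_def)

lemma umon_replicate: "umon V u (replicate c k) v = (md V u (- k) ^^ c) v"
  by (induction c) auto

lemma ordmon_eq_umon: "ordmon V u n i v = umon V u (ordered_modes n i) v"
proof -
  have "fold (\<lambda>j w. (md V u (- int j) ^^ i j) w) js v
      = umon V u (concat (map (\<lambda>j. replicate (i j) (int j)) (rev js))) v" for js
    by (induction js arbitrary: v) (simp_all add: umon_append umon_replicate)
  then show ?thesis
    unfolding ordmon_def ordered_modes_def .
qed

lemma ordered_modes_ge_1: "k \<in> set (ordered_modes n i) \<Longrightarrow> k \<ge> 1"
  unfolding ordered_modes_def by auto

lemma mset_eq_ordered_modes:
  assumes "\<forall>k\<in>set ks. 1 \<le> k \<and> k \<le> 2 * int n + 1"
  shows "mset ks = mset (ordered_modes n (\<lambda>j. count (mset ks) (int j)))"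
proof (rule multiset_eqI)
  fix k
  have count_concat: "count (mset (concat (map (\<lambda>j. replicate (c j) (int j)) js))) k
      = (\<Sum>j\<leftarrow>js. if int j = k then c j else 0)" for c js
    by (induction js) auto
  have "count (mset (ordered_modes n (\<lambda>j. count (mset ks) (int j)))) k
      = (\<Sum>j\<in>{1..<2 * n + 2}. if j = nat k then count (mset ks) k else 0)"
    unfolding ordered_modes_def count_concat
      sum_list_distinct_conv_sum_set[OF distinct_rev[THEN iffD2, OF distinct_upt]]
    by (intro sum.cong) auto
  also have "\<dots> = count (mset ks) k"
    using assms by (auto simp: count_eq_zero_iff)
  finally show "count (mset ks) k
      = count (mset (ordered_modes n (\<lambda>j. count (mset ks) (int j)))) k" ..
qed

lemma gmon_replicate: "gmon V (replicate (length ks) u) ks v = umon V u ks v"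
  unfolding gmon_def umon_def by (induction ks) auto

lemma fsum_eq_sum_lessThan:
  assumes "\<And>i. i \<ge> N \<Longrightarrow> g i = 0"
  shows "fsum g = sum g {..<N}"
  unfolding fsum_def using assms not_le by (intro sum.mono_neutral_left) auto

lemma pochhammer_of_nat_neq_0:
  "0 < x \<Longrightarrow> pochhammer (of_nat x :: 'a::{comm_semiring_1, semiring_char_0}) p \<noteq> 0"
  by (simp add: pochhammer_of_nat pochhammer_pos)

lemma perm_propD:
  assumes "perm_prop V u W" "\<sigma> permutes {..<m}" "m \<ge> 1" "length as = m" "length ks = m"
    "set as \<subseteq> Vu V u" "v \<in> W"
  shows "gmon V as ks v - gmon V (map (\<lambda>i. as ! \<sigma> i) [0..<m]) (map (\<lambda>i. ks ! \<sigma> i) [0..<m]) v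
           \<in> Ffilt V u (m - 1) v"
  using assms unfolding perm_prop_def by blast

lemma zhu_gen_mono: "G \<subseteq> zhu_gen V n H \<Longrightarrow> zhu_gen V n G \<subseteq> zhu_gen V n H"
proof
  fix x
  assume "G \<subseteq> zhu_gen V n H" "x \<in> zhu_gen V n G"
  then show "x \<in> zhu_gen V n H"
    by (induction rule: zhu_gen.induct[OF \<open>x \<in> zhu_gen V n G\<close>]) (auto intro: zhu_gen.intros)
qed

lemma perm_prop_subset: "perm_prop V u W \<Longrightarrow> W' \<subseteq> W \<Longrightarrow> perm_prop V u W'"
  unfolding perm_prop_def by blast

locale VOA =
  fixes V :: "('v::ab_group_add) voa"
  assumes is_VOA: "is_VOA V"
begin

sublocale vs: vector_space "scal V"
  using is_VOA unfolding is_VOA_def by blast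

lemma
  shows linear_md: "Vector_Spaces.linear (scal V) (scal V) (md V a k)"
    and subspace_wsp: "vs.subspace (wsp V m)"
    and grading: "\<exists>!f. finite {m. f m \<noteq> 0} \<and> (\<forall>m. f m \<in> wsp V m)
                       \<and> x = (\<Sum>m\<in>{m. f m \<noteq> 0}. f m)"
    and truncation: "\<exists>K. \<forall>k\<ge>K. md V a k b = 0"
    and md_nonneg_vac: "k \<ge> 0 \<Longrightarrow> md V a k (vac V) = 0"
    and md_minus1_vac: "md V a (-1) (vac V) = a"
    and virasoro: "\<exists>c::complex. \<forall>m k v.
          Lop V m (Lop V k v) - Lop V k (Lop V m v)
        = scal V (of_int (m - k)) (Lop V (m + k) v)
          + (if m + k = 0 then scal V (of_int (m ^ 3 - m) / 12 * c) v else 0)"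
    and L0_wsp: "v \<in> wsp V m \<Longrightarrow> Lop V 0 v = scal V (of_int m) v"
    and md_L_minus1: "md V (Lop V (-1) a) k b = scal V (- of_int k) (md V a (k - 1) b)"
  using is_VOA unfolding is_VOA_def by auto

lemma module_hom_md: "module_hom (scal V) (scal V) (md V a k)"
  using linear_md by (simp add: linear_iff_module_hom)

lemma md_zero [simp]: "md V a k 0 = 0"
  using module_hom_md by (rule module_hom.zero)

lemma homogeneous_sum_eq_0:
  assumes "finite {m. f m \<noteq> 0}" "\<forall>m. f m \<in> wsp V m" "(\<Sum>m\<in>{m. f m \<noteq> 0}. f m) = 0"
  shows "f m = 0"
proof -
  have "0 \<in> wsp V m" for m
    using subspace_wsp by (rule vs.subspace_0)
  then have "f = (\<lambda>_. 0)"
    using grading[of 0] assms by auto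
  then show ?thesis by simp
qed

lemma L0_eigenvector_in_wsp:
  assumes "Lop V 0 x = scal V (of_int c) x"
  shows "x \<in> wsp V c"
proof -
  obtain f where fin: "finite {m. f m \<noteq> 0}" and f: "\<forall>m. f m \<in> wsp V m"
    and x: "x = (\<Sum>m\<in>{m. f m \<noteq> 0}. f m)"
    using grading by blast
  define g where "g m = scal V (of_int m - of_int c) (f m)" for m
  have supp: "{m. g m \<noteq> 0} \<subseteq> {m. f m \<noteq> 0}"
    unfolding g_def by auto
  have L0x: "Lop V 0 x = (\<Sum>m\<in>{m. f m \<noteq> 0}. scal V (of_int m) (f m))"
    unfolding x Lop_def module_hom_md[THEN module_hom.sum]
    using f L0_wsp by (intro sum.cong) (auto simp: Lop_def)
  have "(\<Sum>m\<in>{m. g m \<noteq> 0}. g m) = (\<Sum>m\<in>{m. f m \<noteq> 0}. g m)"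
    using supp fin by (intro sum.mono_neutral_left) auto
  also have "\<dots> = Lop V 0 x - scal V (of_int c) x"
    unfolding g_def L0x vs.scale_left_diff_distrib sum_subtractf
    by (simp only: x vs.scale_sum_right)
  finally have sum_g: "(\<Sum>m\<in>{m. g m \<noteq> 0}. g m) = 0"
    using assms by simp
  have "finite {m. g m \<noteq> 0}"
    using supp fin by (rule finite_subset)
  moreover have "\<forall>m. g m \<in> wsp V m"
    unfolding g_def using f subspace_wsp by (simp add: vs.subspace_scale)
  ultimately have "g m = 0" for m
    using sum_g by (rule homogeneous_sum_eq_0)
  then have "m = c" if "f m \<noteq> 0" for m
    using that unfolding g_def by (cases "m = c") auto
  then have "f m \<in> wsp V c" if "f m \<noteq> 0" for m
    using that f by force
  then show ?thesis
    unfolding x using subspace_wsp by (intro vs.subspace_sum) auto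
qed

lemma Lop_scale: "Lop V k (scal V c x) = scal V c (Lop V k x)"
  unfolding Lop_def using module_hom_md by (rule module_hom.scale)

lemma L_minus1_wsp:
  assumes a: "a \<in> wsp V m"
  shows "Lop V (-1) a \<in> wsp V (m + 1)"
proof -
  obtain c where "\<forall>m k v. Lop V m (Lop V k v) - Lop V k (Lop V m v)
      = scal V (of_int (m - k)) (Lop V (m + k) v)
        + (if m + k = 0 then scal V (of_int (m ^ 3 - m) / 12 * c) v else 0)"
    using virasoro by blast
  from this[rule_format, of 0 "-1" a]
  have "Lop V 0 (Lop V (-1) a) = Lop V (-1) (Lop V 0 a) + Lop V (-1) a"
    by (simp add: algebra_simps)
  also have "\<dots> = scal V (of_int (m + 1)) (Lop V (-1) a)"
    using a by (simp add: L0_wsp Lop_scale vs.scale_left_distrib)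
  finally show ?thesis
    by (rule L0_eigenvector_in_wsp)
qed

lemma L_minus1_pow_wsp: "a \<in> wsp V m \<Longrightarrow> (Lop V (-1) ^^ p) a \<in> wsp V (m + int p)"
proof (induction p)
  case 0
  then show ?case by simp
next
  case (Suc p)
  then show ?case
    using L_minus1_wsp[OF Suc.IH] by (simp add: ac_simps)
qed

lemma md_L_minus1_pow:
  "md V ((Lop V (-1) ^^ p) a) k b = scal V (pochhammer (- of_int k) p) (md V a (k - int p) b)"
proof (induction p arbitrary: k)
  case 0
  then show ?case by simp
next
  case (Suc p)
  then show ?case
    by (simp add: md_L_minus1 pochhammer_rec algebra_simps)
qed

lemma circ_hom_leading_term:
  "circ_hom V n wa a b - md V a (- 2 * int n - 2) b
     \<in> vs.span {md V a j b | j. j > - 2 * int n - 2}"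
proof -
  define g where "g i = scal V (ibin (wa + int n) i) (md V a (int i - 2 * int n - 2) b)" for i
  obtain K where K: "\<forall>k\<ge>K. md V a k b = 0"
    using truncation by blast
  define N where "N = Suc (nat (K + 2 * int n + 2))"
  have "circ_hom V n wa a b = fsum g"
    unfolding circ_hom_def g_def ..
  also have "\<dots> = sum g {..<N}"
    using K unfolding g_def N_def by (intro fsum_eq_sum_lessThan) auto
  also have "\<dots> = g 0 + sum g {1..<N}"
    using sum.atLeast_Suc_lessThan[of 0 N g] by (simp add: N_def atLeast0LessThan)
  also have "g 0 = md V a (- 2 * int n - 2) b"
    by (simp add: g_def ibin_def)
  finally have "circ_hom V n wa a b - md V a (- 2 * int n - 2) b = sum g {1..<N}"
    by simp
  also have "\<dots> \<in> vs.span {md V a j b | j. j > - 2 * int n - 2}"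
    unfolding g_def by (intro vs.span_sum vs.span_scale vs.span_base) auto
  finally show ?thesis .
qed

lemma circ_hom_in_Ocirc: "a \<in> wsp V m \<Longrightarrow> circ_hom V n m a b \<in> Ocirc V n"
  unfolding Ocirc_def by (intro vs.span_base) blast

lemma mode_reduction:
  assumes u: "u \<in> wsp V wt" and k: "k \<ge> 2 * int n + 2"
  shows "md V u (- k) w \<in> vs.span ({md V u (- j) w | j. j < k} \<union> Ocirc V n)"
    (is "_ \<in> ?S")
proof -
  define p where "p = nat (k - 2 * int n - 2)"
  define a where "a = (Lop V (-1) ^^ p) u"
  define c :: complex where "c = pochhammer (of_nat (2 * n + 2)) p"
  have md_a: "md V a j w = scal V (pochhammer (- of_int j) p) (md V u (j - int p) w)" for j
    unfolding a_def by (rule md_L_minus1_pow)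
  have "circ_hom V n (wt + int p) a w \<in> Ocirc V n"
    unfolding a_def using L_minus1_pow_wsp[OF u] by (rule circ_hom_in_Ocirc)
  then have circ: "circ_hom V n (wt + int p) a w \<in> ?S"
    by (intro vs.span_base UnI2)
  have "md V a j w \<in> ?S" if "j > - 2 * int n - 2" for j
  proof -
    have "md V u (j - int p) w \<in> ?S"
      using that k by (intro vs.span_base UnI1 CollectI exI[of _ "int p - j"]) (simp add: p_def)
    then show ?thesis
      unfolding md_a by (rule vs.span_scale)
  qed
  then have "vs.span {md V a j w | j. j > - 2 * int n - 2} \<subseteq> ?S"
    by (intro vs.span_minimal) auto
  then have "circ_hom V n (wt + int p) a w - md V a (- 2 * int n - 2) w \<in> ?S"
    using circ_hom_leading_term by (rule subsetD)
  moreover have "md V a (- 2 * int n - 2) w = scal V c (md V u (- k) w)"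
    unfolding md_a c_def using k by (simp add: p_def add.commute)
  ultimately have "scal V c (md V u (- k) w) \<in> ?S"
    using vs.span_diff[OF circ] by fastforce
  moreover have "c \<noteq> 0"
    unfolding c_def by (rule pochhammer_of_nat_neq_0) simp
  ultimately show ?thesis
    using vs.span_scale[of "scal V c (md V u (- k) w)" _ "inverse c"] by simp
qed

lemma umon_zero [simp]: "umon V u ks 0 = 0"
  by (induction ks) simp_all

lemma u_in_Vu: "u \<in> Vu V u"
proof -
  have "umon V u [1] (vac V) \<in> {umon V u ks (vac V) | ks. \<forall>k\<in>set ks. k \<ge> 1}"
    by (rule CollectI, rule exI[of _ "[1]"]) simp
  then show ?thesis
    unfolding Vu_def by (simp add: md_minus1_vac vs.span_base)
qed

lemma umon_perm_in_Ffilt: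
  assumes pp: "perm_prop V u W" and v: "v \<in> W"
    and ks: "mset ks = mset ks'" "ks \<noteq> []"
  shows "umon V u ks v - umon V u ks' v \<in> Ffilt V u (length ks - 1) v"
proof -
  define m where "m = length ks"
  obtain \<sigma> where \<sigma>: "\<sigma> permutes {..<m}" "permute_list \<sigma> ks = ks'"
    using mset_eq_permutation[OF ks(1)[symmetric]] unfolding m_def by blast
  have "m \<ge> 1"
    using ks(2) unfolding m_def by (simp add: Suc_le_eq)
  moreover have "set (replicate m u) \<subseteq> Vu V u"
    using u_in_Vu by (simp add: set_replicate_conv_if)
  ultimately have "gmon V (replicate m u) ks v
      - gmon V (map (\<lambda>i. replicate m u ! \<sigma> i) [0..<m]) (map (\<lambda>i. ks ! \<sigma> i) [0..<m]) v
      \<in> Ffilt V u (m - 1) v"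
    using pp \<sigma>(1) v unfolding m_def by (intro perm_propD) auto
  moreover have "map (\<lambda>i. replicate m u ! \<sigma> i) [0..<m] = replicate m u"
    using permutes_in_image[OF \<sigma>(1)] by (intro nth_equalityI) auto
  moreover have "map (\<lambda>i. ks ! \<sigma> i) [0..<m] = ks'"
    using \<sigma>(2) unfolding permute_list_def m_def .
  moreover have "length ks' = m"
    unfolding m_def using ks(1) by (rule mset_eq_length[symmetric])
  ultimately show ?thesis
    unfolding m_def by (metis gmon_replicate)
qed

lemma md_nonneg_umon_in_Ffilt:
  assumes pp: "perm_prop V u W" and v: "v \<in> W"
    and j: "j \<ge> 0" "md V u j v = 0"
  shows "md V u j (umon V u ks v) \<in> Ffilt V u (length ks) v"
proof -
  have "umon V u (- j # ks) v - umon V u (ks @ [- j]) v \<in> Ffilt V u (length ks) v"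
    using umon_perm_in_Ffilt[OF pp v, of "- j # ks" "ks @ [- j]"] by simp
  then show ?thesis
    using j by (simp add: umon_append)
qed

definition ordered_span :: "'v \<Rightarrow> nat \<Rightarrow> 'v set \<Rightarrow> 'v set" where
  "ordered_span u n W = vs.span ({ordmon V u n i v | i v. v \<in> W} \<union> Ocirc V n)"

lemma in_ordered_span: "v \<in> W \<Longrightarrow> v \<in> ordered_span u n W"
proof -
  assume "v \<in> W"
  moreover have "ordered_modes n (\<lambda>_. 0) = []"
    unfolding ordered_modes_def by simp
  ultimately have "umon V u (ordered_modes n (\<lambda>_. 0)) v \<in> {ordmon V u n i v | i v. v \<in> W}"
    unfolding ordmon_eq_umon by blast
  then show ?thesis
    unfolding ordered_span_def using \<open>ordered_modes n (\<lambda>_. 0) = []\<close> by (simp add: vs.span_base)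
qed

lemma Ocirc_subset_ordered_span: "Ocirc V n \<subseteq> ordered_span u n W"
  unfolding ordered_span_def using vs.span_superset by blast

lemma ordered_span_add_diff:
  "x - y \<in> ordered_span u n W \<Longrightarrow> y \<in> ordered_span u n W \<Longrightarrow> x \<in> ordered_span u n W"
  unfolding ordered_span_def using vs.span_add by fastforce

lemma umon_bounded_in_ordered_span:
  assumes pp: "perm_prop V u W" and v: "v \<in> W"
    and ks: "\<forall>k\<in>set ks. 1 \<le> k \<and> k \<le> 2 * int n + 1"
    and F: "Ffilt V u (length ks - 1) v \<subseteq> ordered_span u n W"
  shows "umon V u ks v \<in> ordered_span u n W"
proof (cases "ks = []")
  case True
  then have "umon V u ks v \<in> Ffilt V u (length ks - 1) v"
    unfolding Ffilt_def by (intro vs.span_base) auto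
  then show ?thesis
    using F by blast
next
  case False
  define i where "i j = count (mset ks) (int j)" for j
  have ms: "mset ks = mset (ordered_modes n i)"
    unfolding i_def using ks by (rule mset_eq_ordered_modes)
  have "umon V u ks v - umon V u (ordered_modes n i) v \<in> ordered_span u n W"
    using umon_perm_in_Ffilt[OF pp v ms False] F by blast
  moreover have "umon V u (ordered_modes n i) v \<in> ordered_span u n W"
    unfolding ordered_span_def ordmon_eq_umon[symmetric] using v by (intro vs.span_base) blast
  ultimately show ?thesis
    by (rule ordered_span_add_diff)
qed

lemma umon_in_ordered_span_if_Ffilt:
  assumes u: "u \<in> wsp V wt" and pp: "perm_prop V u W" and v: "v \<in> W"
    and z: "\<forall>j\<ge>0. md V u j v = 0"
    and ks: "\<forall>k\<in>set ks. k \<ge> 1"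
    and F: "Ffilt V u (length ks - 1) v \<subseteq> ordered_span u n W"
  shows "umon V u ks v \<in> ordered_span u n W"
  using ks F
proof (induction "nat (sum_list ks)" arbitrary: ks rule: less_induct)
  case less
  show ?case
  proof (cases "\<forall>k\<in>set ks. k \<le> 2 * int n + 1")
    case True
    then show ?thesis
      using umon_bounded_in_ordered_span[OF pp v _ less.prems(2)] less.prems(1) by auto
  next
    case False
    then obtain k where k: "k \<in> set ks" "k > 2 * int n + 1"
      by auto
    define rest where "rest = remove1 k ks"
    have ms: "mset ks = mset (k # rest)"
      using k(1) by (simp add: rest_def)
    then have len: "length ks = Suc (length rest)"
      by (simp add: mset_eq_length[OF ms])
    have sum: "sum_list ks = k + sum_list rest"
      unfolding sum_mset_sum_list[symmetric] ms by simp
    have rest: "\<forall>j\<in>set rest. j \<ge> 1"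
      using less.prems(1) set_remove1_subset[of k ks] unfolding rest_def by blast
    have "md V u (- j) (umon V u rest v) \<in> ordered_span u n W" if "j < k" for j
    proof (cases "j \<ge> 1")
      case True
      have "nat (sum_list (j # rest)) < nat (sum_list ks)"
        using sum that True sum_list_nonneg[of rest] rest by force
      then show ?thesis
        using less.hyps[of "j # rest"] rest True less.prems(2) len by simp
    next
      case False
      then have "md V u (- j) (umon V u rest v) \<in> Ffilt V u (length rest) v"
        using md_nonneg_umon_in_Ffilt[OF pp v] z by simp
      then show ?thesis
        using less.prems(2) len by auto
    qed
    then have "vs.span ({md V u (- j) (umon V u rest v) | j. j < k} \<union> Ocirc V n)
        \<subseteq> ordered_span u n W"
      using Ocirc_subset_ordered_span by (intro vs.span_minimal) (auto simp: ordered_span_def)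
    then have "umon V u (k # rest) v \<in> ordered_span u n W"
      using mode_reduction[OF u, of n k] k(2) by auto
    moreover have "umon V u ks v - umon V u (k # rest) v \<in> ordered_span u n W"
      using umon_perm_in_Ffilt[OF pp v ms] less.prems(2) k(1) by fastforce
    ultimately show ?thesis
      by (rule ordered_span_add_diff[rotated])
  qed
qed

lemma umon_in_ordered_span:
  assumes u: "u \<in> wsp V wt" and pp: "perm_prop V u W" and v: "v \<in> W"
    and z: "\<forall>j\<ge>0. md V u j v = 0"
  shows "\<forall>k\<in>set ks. k \<ge> 1 \<Longrightarrow> umon V u ks v \<in> ordered_span u n W"
proof (induction "length ks" arbitrary: ks rule: less_induct)
  case less
  have "umon V u ks' v \<in> ordered_span u n W"
    if "length ks' \<le> length ks - 1" "\<forall>k\<in>set ks'. k \<ge> 1" for ks'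
  proof (cases "ks' = []")
    case True
    then show ?thesis
      using in_ordered_span[OF v] by simp
  next
    case False
    then have "length ks' < length ks"
      using that(1) by (cases ks') auto
    then show ?thesis
      using less.hyps that(2) by blast
  qed
  then have "Ffilt V u (length ks - 1) v \<subseteq> ordered_span u n W"
    unfolding Ffilt_def by (intro vs.span_minimal) (auto simp: ordered_span_def)
  then show ?case
    by (rule umon_in_ordered_span_if_Ffilt[OF u pp v z less.prems])
qed

lemma acts_strongly_reduction:
  assumes u: "u \<in> wsp V wt" and W: "acts_strongly V u W" and x: "x \<in> AuW_reps V u W"
  shows "\<exists>y\<in>vs.span {ordmon V u n i v | i v. v \<in> W}. x - y \<in> Ocirc V n"
proof -
  obtain ks v where x: "x = umon V u ks v" and v: "v \<in> W" and ks: "\<forall>k\<in>set ks. k \<ge> 1"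
    using x unfolding AuW_reps_def by blast
  have "perm_prop V u W" and "\<forall>j\<ge>0. md V u j v = 0"
    using W v u_in_Vu unfolding acts_strongly_def by blast+
  then have "x \<in> ordered_span u n W"
    unfolding x using umon_in_ordered_span[OF u _ v _ ks] by blast
  then obtain y z where "x = y + z" "y \<in> vs.span {ordmon V u n i v | i v. v \<in> W}"
    and "z \<in> vs.span (Ocirc V n)"
    unfolding ordered_span_def vs.span_Un by blast
  moreover have "vs.span (Ocirc V n) = Ocirc V n"
    unfolding Ocirc_def by (rule vs.span_span)
  ultimately show ?thesis
    by force
qed

lemma vac_in_Vu: "vac V \<in> Vu V u"
proof -
  have "umon V u [] (vac V) \<in> {umon V u ks (vac V) | ks. \<forall>k\<in>set ks. k \<ge> 1}"
    by (rule CollectI, rule exI[of _ "[]"]) simp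
  then show ?thesis
    unfolding Vu_def by (simp add: vs.span_base)
qed

lemma ordmon_vac_in_Vu: "ordmon V u n i (vac V) \<in> Vu V u"
  unfolding Vu_def ordmon_eq_umon using ordered_modes_ge_1 by (intro vs.span_base) blast

lemma Vu_subset_ordered_span:
  assumes u: "u \<in> wsp V wt" and pp: "perm_prop V u (Vu V u)"
  shows "Vu V u \<subseteq> ordered_span u n {vac V}"
  unfolding Vu_def
proof (rule vs.span_minimal)
  have "perm_prop V u {vac V}"
    using pp by (rule perm_prop_subset) (simp add: vac_in_Vu)
  then show "{umon V u ks (vac V) | ks. \<forall>k\<in>set ks. k \<ge> 1} \<subseteq> ordered_span u n {vac V}"
    using umon_in_ordered_span[OF u _ singletonI] md_nonneg_vac by blast
  show "vs.subspace (ordered_span u n {vac V})"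
    unfolding ordered_span_def by (rule vs.subspace_span)
qed

lemma Ocirc_subset_On: "Ocirc V n \<subseteq> On V n"
proof -
  have "0 \<in> OL V"
    unfolding OL_def Lop_def by (auto intro!: exI[of _ 0])
  then show ?thesis
    unfolding On_def by force
qed

lemma zero_in_On: "0 \<in> On V n"
  by (rule subsetD[OF Ocirc_subset_On]) (simp add: Ocirc_def vs.span_zero)

lemma subspace_zhu_gen: "vs.subspace (zhu_gen V n G)"
  unfolding vs.subspace_def
  using zero_in_On zhu_gen.ideal zhu_gen.add zhu_gen.smult by blast

lemma ordered_span_subset_zhu_gen:
  "ordered_span u n W \<subseteq> zhu_gen V n {ordmon V u n i v | i v. v \<in> W}"
  unfolding ordered_span_def using Ocirc_subset_On
  by (intro vs.span_minimal subspace_zhu_gen) (auto intro: zhu_gen.gen zhu_gen.ideal)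

lemma Vu_subset_zhu_gen_ordmon_vac:
  assumes "u \<in> wsp V wt" "perm_prop V u (Vu V u)"
  shows "Vu V u \<subseteq> zhu_gen V n {ordmon V u n i (vac V) | i. True}"
proof -
  have "Vu V u \<subseteq> ordered_span u n {vac V}"
    by (rule Vu_subset_ordered_span[OF assms])
  also have "\<dots> \<subseteq> zhu_gen V n {ordmon V u n i v | i v. v \<in> {vac V}}"
    by (rule ordered_span_subset_zhu_gen)
  also have "{ordmon V u n i v | i v. v \<in> {vac V}} = {ordmon V u n i (vac V) | i. True}"
    by blast
  finally show ?thesis .
qed

end

theorem proposition3p6:
  fixes V :: "('v::ab_group_add) voa" and n :: nat and u :: 'v and wtu :: int
  assumes "is_VOA V"
    and "u \<in> wsp V wtu" and "wtu \<ge> - int n"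
    and "\<forall>a\<in>Vu V u. \<forall>b\<in>Vu V u. \<forall>k. md V a k b \<in> Vu V u"
    and "perm_prop V u (Vu V u)"
  shows "zhu_gen V n (Vu V u) = zhu_gen V n {ordmon V u n i (vac V) | i. True}
         \<and> (\<forall>W. acts_strongly V u W \<longrightarrow>
           (\<forall>x\<in>AuW_reps V u W. \<exists>y\<in>module.span (scal V) {ordmon V u n i v | i v. v \<in> W}.
              x - y \<in> Ocirc V n))"
proof -
  interpret VOA V
    by (rule VOA.intro) fact
  let ?G = "{ordmon V u n i (vac V) | i. True}"
  have "Vu V u \<subseteq> zhu_gen V n ?G"
    using assms(2,5) by (rule Vu_subset_zhu_gen_ordmon_vac)
  moreover have "?G \<subseteq> Vu V u"
    using ordmon_vac_in_Vu by blast
  ultimately have "zhu_gen V n (Vu V u) = zhu_gen V n ?G"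
    by (intro subset_antisym zhu_gen_mono) (auto intro: zhu_gen.gen)
  then show ?thesis
    using acts_strongly_reduction[OF assms(2)] by blast
qed

end
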